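(* Let $(\mathcal{C},\Sigma,\rhd)$ be a right triangulated category and let $\mathcal{M}$ be a rigid subcategory of $\mathcal{C}$ (i.e. $\mathrm{Hom}_{\mathcal{C}}(\mathcal{M},\Sigma\mathcal{M})=0$) such that (RC1) the restriction of $\Sigma$ to $\mathcal{M}$ is fully faithful, and (RC2) for any $M_0,M_1\in\mathcal{M}$ and any right triangle $M_0\xrightarrow{f}M_1\xrightarrow{g}X\xrightarrow{h}\Sigma M_0$, the morphism $g$ is a right $\mathcal{M}$-approximation of $X$. Then for any right triangle $M_0\xrightarrow{f}M_1\xrightarrow{g}X\xrightarrow{h}\Sigma M_0$ with $M_0,M_1\in\mathcal{M}$ there is an exact sequence in $\mathrm{Mod}\,\mathcal{M}$ $$\mathrm{Hom}_{\mathcal{M}}(-,M_0)\xrightarrow{\mathrm{Hom}_{\mathcal{M}}(-,f)}\mathrm{Hom}_{\mathcal{M}}(-,M_1)\xrightarrow{\mathrm{Hom}_{\mathcal{C}}(-,g)}\mathrm{Hom}_{\mathcal{C}}(-,X)|_{\mathcal{M}}\to 0.$$ In particular $\mathrm{Hom}_{\mathcal{C}}(-,X)|_{\mathcal{M}}\in\mathrm{mod}\,\mathcal{M}$.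
   Context: Throughout, $k$ is a field and all categories are Hom-finite Krull–Schmidt $k$-linear categories; a subcategory means a full additive subcategory closed under direct summands. A right $\mathcal{M}$-approximation of $X$ is a morphism $g:M_1\to X$ with $M_1\in\mathcal{M}$ such that $\mathrm{Hom}_{\mathcal{C}}(M,M_1)\to\mathrm{Hom}_{\mathcal{C}}(M,X)$ is surjective for all $M\in\mathcal{M}$. $\mathrm{Mod}\,\mathcal{M}$ is the category of contravariant $k$-linear functors $\mathcal{M}\to\mathrm{Mod}\,k$, and $\mathrm{mod}\,\mathcal{M}$ its full subcategory of finitely presented ones (cokernels of morphisms between representable functors $\mathrm{Hom}_{\mathcal{M}}(-,M)$). A right triangulated category is a triple $(\mathcal{C},\Sigma,\rhd)$ with $\mathcal{C}$ additive, $\Sigma:\mathcal{C}\to\mathcal{C}$ an additive functor, and $\rhd$ a class of sequences $U\xrightarrow{u}V\xrightarrow{v}W\xrightarrow{w}\Sigma U$ (right triangles) such that: (RTR0) a sequence isomorphic (via isomorphisms $f,g,h$ on $U,V,W$ and $\Sigma f$ on $\Sigma U$) to a right triangle is a right triangle; (RTR1) $0\to U\xrightarrow{1_U}U\to 0$ is a right triangle for every $U$, and every $u:U\to V$ fits into a right triangle $U\xrightarrow{u}V\xrightarrow{v}W\xrightarrow{w}\Sigma U$; (RTR2) if $U\xrightarrow{u}V\xrightarrow{v}W\xrightarrow{w}\Sigma U$ is a right triangle, so is $V\xrightarrow{v}W\xrightarrow{w}\Sigma U\xrightarrow{-\Sigma u}\Sigma V$; (RTR3) given right triangles $U\xrightarrow{u}V\xrightarrow{v}W\xrightarrow{w}\Sigma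 U$, $U'\xrightarrow{u'}V'\xrightarrow{v'}W'\xrightarrow{w'}\Sigma U'$ and $f:U\to U'$, $g:V\to V'$ with $gu=u'f$, there is $h:W\to W'$ with $hv=v'g$ and $w'h=(\Sigma f)w$; (RTR4) given right triangles $U\xrightarrow{u}V\xrightarrow{v}W\xrightarrow{w}\Sigma U$ and $U'\xrightarrow{u'}U\xrightarrow{v'}W'\xrightarrow{w'}\Sigma U'$, there exist a right triangle $U'\xrightarrow{uu'}V\xrightarrow{p}V'\xrightarrow{q}\Sigma U'$ and a right triangle $W'\xrightarrow{f}V'\xrightarrow{g}W\xrightarrow{(\Sigma v')w}\Sigma W'$ with $fv'=pu$, $qf=w'$, $gp=v$. *)

theory Defs
  imports Main
begin

text \<open>Objects are the elements of type 'o; morphisms form the set c_mor C of elements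
of type 'm, each with a unique source and target.\<close>

record ('o, 'm, 'k) klincat =
  c_mor  :: "'m set"
  c_src  :: "'m \<Rightarrow> 'o"
  c_tgt  :: "'m \<Rightarrow> 'o"
  c_comp :: "'m \<Rightarrow> 'm \<Rightarrow> 'm"   (* c_comp C g f = g o f *)
  c_id   :: "'o \<Rightarrow> 'm"
  c_add  :: "'m \<Rightarrow> 'm \<Rightarrow> 'm"
  c_neg  :: "'m \<Rightarrow> 'm"
  c_zero :: "'o \<Rightarrow> 'o \<Rightarrow> 'm"
  c_smul :: "'k \<Rightarrow> 'm \<Rightarrow> 'm"

definition Hom :: "('o, 'm, 'k) klincat \<Rightarrow> 'o \<Rightarrow> 'o \<Rightarrow> 'm set" where
  "Hom C a b = {f \<in> c_mor C. c_src C f = a \<and> c_tgt C f = b}"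

definition is_klinear_cat :: "('o, 'm, 'k::field) klincat \<Rightarrow> bool" where
  "is_klinear_cat C \<longleftrightarrow>
    (\<forall>a. c_id C a \<in> Hom C a a) \<and>
    (\<forall>a b c f g. f \<in> Hom C a b \<longrightarrow> g \<in> Hom C b c \<longrightarrow> c_comp C g f \<in> Hom C a c) \<and>
    (\<forall>a b c d f g h. f \<in> Hom C a b \<longrightarrow> g \<in> Hom C b c \<longrightarrow> h \<in> Hom C c d \<longrightarrow>
        c_comp C h (c_comp C g f) = c_comp C (c_comp C h g) f) \<and>
    (\<forall>a b f. f \<in> Hom C a b \<longrightarrow> c_comp C (c_id C b) f = f \<and> c_comp C f (c_id C a) = f) \<and>
    (\<forall>a b. c_zero C a b \<in> Hom C a b) \<and>
    (\<forall>a b f g. f \<in> Hom C a b \<longrightarrow> g \<in> Hom C a b \<longrightarrow> c_add C f g \<in> Hom C a b) \<and>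
    (\<forall>a b f. f \<in> Hom C a b \<longrightarrow> c_neg C f \<in> Hom C a b) \<and>
    (\<forall>a b f x. f \<in> Hom C a b \<longrightarrow> c_smul C x f \<in> Hom C a b) \<and>
    (\<forall>a b f g h. f \<in> Hom C a b \<longrightarrow> g \<in> Hom C a b \<longrightarrow> h \<in> Hom C a b \<longrightarrow>
        c_add C (c_add C f g) h = c_add C f (c_add C g h)) \<and>
    (\<forall>a b f g. f \<in> Hom C a b \<longrightarrow> g \<in> Hom C a b \<longrightarrow> c_add C f g = c_add C g f) \<and>
    (\<forall>a b f. f \<in> Hom C a b \<longrightarrow> c_add C (c_zero C a b) f = f) \<and>
    (\<forall>a b f. f \<in> Hom C a b \<longrightarrow> c_add C f (c_neg C f) = c_zero C a b) \<and>
    (\<forall>a b f. f \<in> Hom C a b \<longrightarrow> c_smul C 1 f = f) \<and>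
    (\<forall>a b f x y. f \<in> Hom C a b \<longrightarrow> c_smul C (x * y) f = c_smul C x (c_smul C y f)) \<and>
    (\<forall>a b f x y. f \<in> Hom C a b \<longrightarrow>
        c_smul C (x + y) f = c_add C (c_smul C x f) (c_smul C y f)) \<and>
    (\<forall>a b f g x. f \<in> Hom C a b \<longrightarrow> g \<in> Hom C a b \<longrightarrow>
        c_smul C x (c_add C f g) = c_add C (c_smul C x f) (c_smul C x g)) \<and>
    (\<forall>a b c f g g'. f \<in> Hom C a b \<longrightarrow> g \<in> Hom C b c \<longrightarrow> g' \<in> Hom C b c \<longrightarrow>
        c_comp C (c_add C g g') f = c_add C (c_comp C g f) (c_comp C g' f)) \<and>
    (\<forall>a b c f f' g. f \<in> Hom C a b \<longrightarrow> f' \<in> Hom C a b \<longrightarrow> g \<in> Hom C b c \<longrightarrow>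
        c_comp C g (c_add C f f') = c_add C (c_comp C g f) (c_comp C g f')) \<and>
    (\<forall>a b c f g x. f \<in> Hom C a b \<longrightarrow> g \<in> Hom C b c \<longrightarrow>
        c_comp C (c_smul C x g) f = c_smul C x (c_comp C g f) \<and>
        c_comp C g (c_smul C x f) = c_smul C x (c_comp C g f))"

definition lincomb :: "('o, 'm, 'k) klincat \<Rightarrow> 'o \<Rightarrow> 'o \<Rightarrow> 'k list \<Rightarrow> 'm list \<Rightarrow> 'm" where
  "lincomb C a b cs fs =
     foldr (\<lambda>(x, f) acc. c_add C (c_smul C x f) acc) (zip cs fs) (c_zero C a b)"

definition msum :: "('o, 'm, 'k) klincat \<Rightarrow> 'o \<Rightarrow> 'o \<Rightarrow> 'm list \<Rightarrow> 'm" where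
  "msum C a b fs = foldr (c_add C) fs (c_zero C a b)"

definition hom_finite :: "('o, 'm, 'k) klincat \<Rightarrow> bool" where
  "hom_finite C \<longleftrightarrow> (\<forall>a b. \<exists>bs. set bs \<subseteq> Hom C a b \<and>
      (\<forall>f \<in> Hom C a b. \<exists>cs. length cs = length bs \<and> f = lincomb C a b cs bs))"

definition is_zero_obj :: "('o, 'm, 'k) klincat \<Rightarrow> 'o \<Rightarrow> bool" where
  "is_zero_obj C z \<longleftrightarrow> c_id C z = c_zero C z z"

definition is_dsum :: "('o, 'm, 'k) klincat \<Rightarrow> 'o \<Rightarrow> 'o list \<Rightarrow> bool" where
  "is_dsum C x ys \<longleftrightarrow> (\<exists>\<iota> \<pi> :: nat \<Rightarrow> 'm.
      (\<forall>j < length ys. \<iota> j \<in> Hom C (ys ! j) x \<and> \<pi> j \<in> Hom C x (ys ! j)) \<and>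
      (\<forall>j < length ys. \<forall>l < length ys.
          c_comp C (\<pi> j) (\<iota> l) = (if j = l then c_id C (ys ! j) else c_zero C (ys ! l) (ys ! j))) \<and>
      msum C x x (map (\<lambda>j. c_comp C (\<iota> j) (\<pi> j)) [0..<length ys]) = c_id C x)"

definition is_additive :: "('o, 'm, 'k) klincat \<Rightarrow> bool" where
  "is_additive C \<longleftrightarrow> (\<exists>z. is_zero_obj C z) \<and> (\<forall>a b. \<exists>s. is_dsum C s [a, b])"

definition invertible_end :: "('o, 'm, 'k) klincat \<Rightarrow> 'o \<Rightarrow> 'm \<Rightarrow> bool" where
  "invertible_end C y e \<longleftrightarrow>
     (\<exists>e' \<in> Hom C y y. c_comp C e e' = c_id C y \<and> c_comp C e' e = c_id C y)"

definition local_end :: "('o, 'm, 'k) klincat \<Rightarrow> 'o \<Rightarrow> bool" where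
  "local_end C y \<longleftrightarrow> c_id C y \<noteq> c_zero C y y \<and>
     (\<forall>e \<in> Hom C y y. invertible_end C y e \<or>
        invertible_end C y (c_add C (c_id C y) (c_neg C e)))"

definition krull_schmidt :: "('o, 'm, 'k) klincat \<Rightarrow> bool" where
  "krull_schmidt C \<longleftrightarrow> (\<forall>x. \<exists>ys. (\<forall>y \<in> set ys. local_end C y) \<and> is_dsum C x ys)"

definition std_cat :: "('o, 'm, 'k::field) klincat \<Rightarrow> bool" where
  "std_cat C \<longleftrightarrow> is_klinear_cat C \<and> hom_finite C \<and> is_additive C \<and> krull_schmidt C"

text \<open>Subcategory: full additive subcategory closed under direct summands,
given by its set of objects.\<close>
definition is_subcat :: "('o, 'm, 'k) klincat \<Rightarrow> 'o set \<Rightarrow> bool" where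
  "is_subcat C M \<longleftrightarrow>
     (\<forall>z. is_zero_obj C z \<longrightarrow> z \<in> M) \<and>
     (\<forall>a b s. a \<in> M \<longrightarrow> b \<in> M \<longrightarrow> is_dsum C s [a, b] \<longrightarrow> s \<in> M) \<and>
     (\<forall>x y z. x \<in> M \<longrightarrow> is_dsum C x [y, z] \<longrightarrow> y \<in> M)"

definition is_iso :: "('o, 'm, 'k) klincat \<Rightarrow> 'm \<Rightarrow> 'o \<Rightarrow> 'o \<Rightarrow> bool" where
  "is_iso C f a b \<longleftrightarrow> f \<in> Hom C a b \<and>
     (\<exists>g \<in> Hom C b a. c_comp C g f = c_id C a \<and> c_comp C f g = c_id C b)"

definition is_additive_functor ::
  "('o, 'm, 'k) klincat \<Rightarrow> ('o \<Rightarrow> 'o) \<Rightarrow> ('m \<Rightarrow> 'm) \<Rightarrow> bool" where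
  "is_additive_functor C S Sm \<longleftrightarrow>
     (\<forall>a b f. f \<in> Hom C a b \<longrightarrow> Sm f \<in> Hom C (S a) (S b)) \<and>
     (\<forall>a. Sm (c_id C a) = c_id C (S a)) \<and>
     (\<forall>a b c f g. f \<in> Hom C a b \<longrightarrow> g \<in> Hom C b c \<longrightarrow>
        Sm (c_comp C g f) = c_comp C (Sm g) (Sm f)) \<and>
     (\<forall>a b f g. f \<in> Hom C a b \<longrightarrow> g \<in> Hom C a b \<longrightarrow>
        Sm (c_add C f g) = c_add C (Sm f) (Sm g))"

text \<open>A right triangle U -u-> V -v-> W -w-> S U is encoded as (U, V, W, u, v, w).\<close>

type_synonym ('o, 'm) tri = "'o \<times> 'o \<times> 'o \<times> 'm \<times> 'm \<times> 'm"

definition right_triangulated ::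
  "('o, 'm, 'k) klincat \<Rightarrow> ('o \<Rightarrow> 'o) \<Rightarrow> ('m \<Rightarrow> 'm) \<Rightarrow> ('o, 'm) tri set \<Rightarrow> bool" where
  "right_triangulated C S Sm T \<longleftrightarrow>
     is_additive C \<and> is_additive_functor C S Sm \<and>
     \<comment> \<open>right triangles are sequences\<close>
     (\<forall>U V W u v w. (U, V, W, u, v, w) \<in> T \<longrightarrow>
        u \<in> Hom C U V \<and> v \<in> Hom C V W \<and> w \<in> Hom C W (S U)) \<and>
     \<comment> \<open>RTR0\<close>
     (\<forall>U V W u v w U' V' W' u' v' w' f g h. (U, V, W, u, v, w) \<in> T \<longrightarrow>
        u' \<in> Hom C U' V' \<longrightarrow> v' \<in> Hom C V' W' \<longrightarrow> w' \<in> Hom C W' (S U') \<longrightarrow>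
        is_iso C f U U' \<longrightarrow> is_iso C g V V' \<longrightarrow> is_iso C h W W' \<longrightarrow>
        c_comp C g u = c_comp C u' f \<longrightarrow> c_comp C h v = c_comp C v' g \<longrightarrow>
        c_comp C w' h = c_comp C (Sm f) w \<longrightarrow> (U', V', W', u', v', w') \<in> T) \<and>
     \<comment> \<open>RTR1\<close>
     (\<forall>Z U. is_zero_obj C Z \<longrightarrow>
        (Z, U, U, c_zero C Z U, c_id C U, c_zero C U (S Z)) \<in> T) \<and>
     (\<forall>U V u. u \<in> Hom C U V \<longrightarrow> (\<exists>W v w. (U, V, W, u, v, w) \<in> T)) \<and>
     \<comment> \<open>RTR2\<close>
     (\<forall>U V W u v w. (U, V, W, u, v, w) \<in> T \<longrightarrow> (V, W, S U, v, w, c_neg C (Sm u)) \<in> T) \<and>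
     \<comment> \<open>RTR3\<close>
     (\<forall>U V W u v w U' V' W' u' v' w' f g. (U, V, W, u, v, w) \<in> T \<longrightarrow>
        (U', V', W', u', v', w') \<in> T \<longrightarrow> f \<in> Hom C U U' \<longrightarrow> g \<in> Hom C V V' \<longrightarrow>
        c_comp C g u = c_comp C u' f \<longrightarrow>
        (\<exists>h \<in> Hom C W W'. c_comp C h v = c_comp C v' g \<and> c_comp C w' h = c_comp C (Sm f) w)) \<and>
     \<comment> \<open>RTR4\<close>
     (\<forall>U V W u v w U' W' u' v' w'. (U, V, W, u, v, w) \<in> T \<longrightarrow>
        (U', U, W', u', v', w') \<in> T \<longrightarrow>
        (\<exists>V' p q f g. (U', V, V', c_comp C u u', p, q) \<in> T \<and>
           (W', V', W, f, g, c_comp C (Sm v') w) \<in> T \<and>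
           c_comp C f v' = c_comp C p u \<and> c_comp C q f = w' \<and> c_comp C g p = v))"

definition rigid :: "('o, 'm, 'k) klincat \<Rightarrow> ('o \<Rightarrow> 'o) \<Rightarrow> 'o set \<Rightarrow> bool" where
  "rigid C S M \<longleftrightarrow> (\<forall>a \<in> M. \<forall>b \<in> M. \<forall>f \<in> Hom C a (S b). f = c_zero C a (S b))"

definition RC1 :: "('o, 'm, 'k) klincat \<Rightarrow> ('o \<Rightarrow> 'o) \<Rightarrow> ('m \<Rightarrow> 'm) \<Rightarrow> 'o set \<Rightarrow> bool" where
  "RC1 C S Sm M \<longleftrightarrow> (\<forall>a \<in> M. \<forall>b \<in> M. bij_betw Sm (Hom C a b) (Hom C (S a) (S b)))"

definition right_approx :: "('o, 'm, 'k) klincat \<Rightarrow> 'o set \<Rightarrow> 'o \<Rightarrow> 'm \<Rightarrow> 'o \<Rightarrow> bool" where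
  "right_approx C M M1 g X \<longleftrightarrow> M1 \<in> M \<and> g \<in> Hom C M1 X \<and>
     (\<forall>N \<in> M. \<forall>c \<in> Hom C N X. \<exists>a \<in> Hom C N M1. c = c_comp C g a)"

definition RC2 :: "('o, 'm, 'k) klincat \<Rightarrow> ('o, 'm) tri set \<Rightarrow> 'o set \<Rightarrow> bool" where
  "RC2 C T M \<longleftrightarrow> (\<forall>M0 M1 X f g h. M0 \<in> M \<longrightarrow> M1 \<in> M \<longrightarrow> (M0, M1, X, f, g, h) \<in> T \<longrightarrow>
      right_approx C M M1 g X)"

text \<open>Exactness of Hom_M(-,M0) --Hom(-,f)--> Hom_M(-,M1) --Hom(-,g)--> Hom_C(-,X)|_M --> 0
in Mod M; kernels and images in Mod M are computed pointwise, so this means exactness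
of the sequence of k-vector spaces at every object N of M.\<close>
definition modM_exact ::
  "('o, 'm, 'k) klincat \<Rightarrow> 'o set \<Rightarrow> 'o \<Rightarrow> 'o \<Rightarrow> 'o \<Rightarrow> 'm \<Rightarrow> 'm \<Rightarrow> bool" where
  "modM_exact C M M0 M1 X f g \<longleftrightarrow> f \<in> Hom C M0 M1 \<and> g \<in> Hom C M1 X \<and>
     (\<forall>N \<in> M.
        (\<forall>a \<in> Hom C N M1. c_comp C g a = c_zero C N X \<longleftrightarrow> (\<exists>b \<in> Hom C N M0. a = c_comp C f b)) \<and>
        (\<forall>c \<in> Hom C N X. \<exists>a \<in> Hom C N M1. c = c_comp C g a))"

text \<open>Hom_C(-,X)|_M lies in mod M: it is the cokernel of Hom_M(-,f) for some morphism
f : M0 -> M1 in M (by Yoneda, any epimorphism Hom_M(-,M1) -> Hom_C(-,X)|_M is Hom_C(-,g)).\<close>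
definition restr_hom_in_modM :: "('o, 'm, 'k) klincat \<Rightarrow> 'o set \<Rightarrow> 'o \<Rightarrow> bool" where
  "restr_hom_in_modM C M X \<longleftrightarrow>
     (\<exists>M0 \<in> M. \<exists>M1 \<in> M. \<exists>f g. modM_exact C M M0 M1 X f g)"

end

theory Submission
  imports Defs
begin

text \<open>The composite g f vanishes by comparing the triangle with the rotation of the trivial
  triangle on M0 (RTR1, RTR2, RTR3).  If g a = 0 for a : N \<rightarrow> M1, comparing a rotated trivial
  triangle with the rotation of the given one yields k : \<Sigma>N \<rightarrow> \<Sigma>M0 with (\<Sigma>f) k = \<Sigma>a;
  full faithfulness of \<Sigma> on M (RC1) desuspends k to some b with f b = a.  Surjectivity of
  Hom(-,g) on M is exactly (RC2).\<close>

locale klinear_cat =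
  fixes C :: "('o, 'm, 'k::field) klincat"
  assumes klinear: "is_klinear_cat C"
begin

lemma comp_in_Hom: "f \<in> Hom C a b \<Longrightarrow> g \<in> Hom C b c \<Longrightarrow> c_comp C g f \<in> Hom C a c"
  using klinear unfolding is_klinear_cat_def by (elim conjE) metis

lemma id_in_Hom: "c_id C a \<in> Hom C a a"
  using klinear unfolding is_klinear_cat_def by (elim conjE) metis

lemma zero_in_Hom: "c_zero C a b \<in> Hom C a b"
  using klinear unfolding is_klinear_cat_def by (elim conjE) metis

lemma neg_in_Hom: "f \<in> Hom C a b \<Longrightarrow> c_neg C f \<in> Hom C a b"
  using klinear unfolding is_klinear_cat_def by (elim conjE) metis

lemma comp_assoc: "f \<in> Hom C a b \<Longrightarrow> g \<in> Hom C b c \<Longrightarrow> h \<in> Hom C c d \<Longrightarrow>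
    c_comp C h (c_comp C g f) = c_comp C (c_comp C h g) f"
  using klinear unfolding is_klinear_cat_def by (elim conjE) metis

lemma comp_id_right: "f \<in> Hom C a b \<Longrightarrow> c_comp C f (c_id C a) = f"
  using klinear unfolding is_klinear_cat_def by (elim conjE) metis

lemma add_assoc: "f \<in> Hom C a b \<Longrightarrow> g \<in> Hom C a b \<Longrightarrow> h \<in> Hom C a b \<Longrightarrow>
    c_add C (c_add C f g) h = c_add C f (c_add C g h)"
  using klinear unfolding is_klinear_cat_def by (elim conjE) metis

lemma add_commute: "f \<in> Hom C a b \<Longrightarrow> g \<in> Hom C a b \<Longrightarrow> c_add C f g = c_add C g f"
  using klinear unfolding is_klinear_cat_def by (elim conjE) metis

lemma add_zero_left: "f \<in> Hom C a b \<Longrightarrow> c_add C (c_zero C a b) f = f"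
  using klinear unfolding is_klinear_cat_def by (elim conjE) metis

lemma add_neg_right: "f \<in> Hom C a b \<Longrightarrow> c_add C f (c_neg C f) = c_zero C a b"
  using klinear unfolding is_klinear_cat_def by (elim conjE) metis

lemma comp_add_left: "f \<in> Hom C a b \<Longrightarrow> g \<in> Hom C b c \<Longrightarrow> g' \<in> Hom C b c \<Longrightarrow>
    c_comp C (c_add C g g') f = c_add C (c_comp C g f) (c_comp C g' f)"
  using klinear unfolding is_klinear_cat_def by (elim conjE) metis

lemma comp_add_right: "f \<in> Hom C a b \<Longrightarrow> f' \<in> Hom C a b \<Longrightarrow> g \<in> Hom C b c \<Longrightarrow>
    c_comp C g (c_add C f f') = c_add C (c_comp C g f) (c_comp C g f')"
  using klinear unfolding is_klinear_cat_def by (elim conjE) metis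

lemma add_zero_right: "f \<in> Hom C a b \<Longrightarrow> c_add C f (c_zero C a b) = f"
  using add_commute[OF _ zero_in_Hom] add_zero_left by metis

lemma add_neg_left: "f \<in> Hom C a b \<Longrightarrow> c_add C (c_neg C f) f = c_zero C a b"
  using add_commute[OF neg_in_Hom] add_neg_right by metis

lemma add_left_cancel:
  assumes x: "x \<in> Hom C a b" and y: "y \<in> Hom C a b" and z: "z \<in> Hom C a b"
    and eq: "c_add C x y = c_add C x z"
  shows "y = z"
proof -
  have undo: "c_add C (c_neg C x) (c_add C x w) = w" if w: "w \<in> Hom C a b" for w
  proof -
    have "c_add C (c_neg C x) (c_add C x w) = c_add C (c_add C (c_neg C x) x) w"
      using add_assoc[OF neg_in_Hom[OF x] x w] by (rule sym)
    also have "\<dots> = w" using add_neg_left[OF x] add_zero_left[OF w] by simp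
    finally show ?thesis .
  qed
  have "y = c_add C (c_neg C x) (c_add C x y)" using undo[OF y] by (rule sym)
  also have "\<dots> = z" using eq undo[OF z] by simp
  finally show ?thesis .
qed

lemma neg_unique:
  assumes x: "x \<in> Hom C a b" and y: "y \<in> Hom C a b" and sum: "c_add C x y = c_zero C a b"
  shows "y = c_neg C x"
  using add_left_cancel[OF x y neg_in_Hom[OF x]] sum add_neg_right[OF x] by simp

lemma neg_neg: "x \<in> Hom C a b \<Longrightarrow> c_neg C (c_neg C x) = x"
  using neg_unique[OF neg_in_Hom _ add_neg_left] by (metis (no_types))

lemma neg_inject: "x \<in> Hom C a b \<Longrightarrow> y \<in> Hom C a b \<Longrightarrow> c_neg C x = c_neg C y \<Longrightarrow> x = y"
  using neg_neg by metis

lemma comp_zero_right: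
  assumes h: "h \<in> Hom C b c"
  shows "c_comp C h (c_zero C a b) = c_zero C a c"
proof -
  let ?c = "c_comp C h (c_zero C a b)"
  have c: "?c \<in> Hom C a c" using comp_in_Hom[OF zero_in_Hom h] .
  have "c_add C ?c ?c = c_add C ?c (c_zero C a c)"
    using comp_add_right[OF zero_in_Hom zero_in_Hom h] add_zero_left[OF zero_in_Hom]
      add_zero_right[OF c] by simp
  then show ?thesis using add_left_cancel[OF c c zero_in_Hom] by simp
qed

lemma comp_zero_left:
  assumes f: "f \<in> Hom C a b"
  shows "c_comp C (c_zero C b c) f = c_zero C a c"
proof -
  let ?c = "c_comp C (c_zero C b c) f"
  have c: "?c \<in> Hom C a c" using comp_in_Hom[OF f zero_in_Hom] .
  have "c_add C ?c ?c = c_add C ?c (c_zero C a c)"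
    using comp_add_left[OF f zero_in_Hom zero_in_Hom] add_zero_left[OF zero_in_Hom]
      add_zero_right[OF c] by simp
  then show ?thesis using add_left_cancel[OF c c zero_in_Hom] by simp
qed

lemma comp_neg_left:
  assumes f: "f \<in> Hom C a b" and x: "x \<in> Hom C b c"
  shows "c_comp C (c_neg C x) f = c_neg C (c_comp C x f)"
proof -
  have "c_add C (c_comp C x f) (c_comp C (c_neg C x) f) = c_zero C a c"
    using comp_add_left[OF f x neg_in_Hom[OF x]] add_neg_right[OF x] comp_zero_left[OF f]
    by simp
  then show ?thesis using neg_unique comp_in_Hom neg_in_Hom f x by metis
qed

lemma comp_neg_right:
  assumes f: "f \<in> Hom C a b" and x: "x \<in> Hom C b c"
  shows "c_comp C x (c_neg C f) = c_neg C (c_comp C x f)"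
proof -
  have "c_add C (c_comp C x f) (c_comp C x (c_neg C f)) = c_zero C a c"
    using comp_add_right[OF f neg_in_Hom[OF f] x] add_neg_right[OF f] comp_zero_right[OF x]
    by simp
  then show ?thesis using neg_unique comp_in_Hom neg_in_Hom f x by metis
qed

end

locale right_triangulated_cat = klinear_cat C
  for C :: "('o, 'm, 'k::field) klincat" +
  fixes S :: "'o \<Rightarrow> 'o" and Sm :: "'m \<Rightarrow> 'm" and T :: "('o, 'm) tri set"
  assumes right_tri: "right_triangulated C S Sm T"
begin

lemmas right_tri_axioms = right_tri[unfolded right_triangulated_def]

lemma zero_obj_exists: "\<exists>Z. is_zero_obj C Z"
  using right_tri_axioms[THEN conjunct1] unfolding is_additive_def by blast

lemma Sm_in_Hom: "x \<in> Hom C a b \<Longrightarrow> Sm x \<in> Hom C (S a) (S b)"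
  using right_tri_axioms[THEN conjunct2, THEN conjunct1]
  unfolding is_additive_functor_def by blast

lemma Sm_id: "Sm (c_id C a) = c_id C (S a)"
  using right_tri_axioms[THEN conjunct2, THEN conjunct1]
  unfolding is_additive_functor_def by blast

lemma Sm_comp:
  "x \<in> Hom C a b \<Longrightarrow> y \<in> Hom C b c \<Longrightarrow> Sm (c_comp C y x) = c_comp C (Sm y) (Sm x)"
  using right_tri_axioms[THEN conjunct2, THEN conjunct1]
  unfolding is_additive_functor_def by blast

lemma triangle_in_Hom:
  "(U, V, W, u, v, w) \<in> T \<Longrightarrow> u \<in> Hom C U V \<and> v \<in> Hom C V W \<and> w \<in> Hom C W (S U)"
  using right_tri_axioms[THEN conjunct2, THEN conjunct2, THEN conjunct1] by blast

lemma trivial_triangle: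
  "is_zero_obj C Z \<Longrightarrow> (Z, U, U, c_zero C Z U, c_id C U, c_zero C U (S Z)) \<in> T"
  using right_tri_axioms[THEN conjunct2, THEN conjunct2, THEN conjunct2, THEN conjunct2, THEN conjunct1]
  by blast

lemma rotate_triangle:
  "(U, V, W, u, v, w) \<in> T \<Longrightarrow> (V, W, S U, v, w, c_neg C (Sm u)) \<in> T"
  using right_tri_axioms[THEN conjunct2, THEN conjunct2, THEN conjunct2, THEN conjunct2, THEN conjunct2,
      THEN conjunct2, THEN conjunct1]
  by blast

lemma triangle_morphism_exists:
  "(U, V, W, u, v, w) \<in> T \<Longrightarrow> (U', V', W', u', v', w') \<in> T \<Longrightarrow>
    f \<in> Hom C U U' \<Longrightarrow> g \<in> Hom C V V' \<Longrightarrow> c_comp C g u = c_comp C u' f \<Longrightarrow>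
    \<exists>h \<in> Hom C W W'. c_comp C h v = c_comp C v' g \<and> c_comp C w' h = c_comp C (Sm f) w"
  using right_tri_axioms[THEN conjunct2, THEN conjunct2, THEN conjunct2, THEN conjunct2, THEN conjunct2,
      THEN conjunct2, THEN conjunct2, THEN conjunct1]
  by blast

lemma triangle_comp_zero:
  assumes tri: "(U, V, W, u, v, w) \<in> T"
  shows "c_comp C v u = c_zero C U W"
proof -
  obtain Z where Z: "is_zero_obj C Z" using zero_obj_exists by blast
  have u: "u \<in> Hom C U V" using triangle_in_Hom[OF tri] by blast
  obtain k where k: "k \<in> Hom C (S Z) W" "c_comp C k (c_zero C U (S Z)) = c_comp C v u"
    using triangle_morphism_exists[OF rotate_triangle[OF trivial_triangle[OF Z]] tri id_in_Hom u]
      comp_id_right[OF u] by blast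
  then show ?thesis using comp_zero_right by simp
qed

text \<open>Hom(-,U) \<rightarrow> Hom(-,V) \<rightarrow> Hom(-,W) need not be exact at Hom(-,V), but it becomes exact after
  applying \<Sigma>: the witness comes from a morphism of triangles out of the twice rotated
  trivial triangle N \<rightarrow> \<Sigma>Z \<rightarrow> \<Sigma>N \<rightarrow> \<Sigma>N.\<close>

lemma suspended_kernel_factorization:
  assumes tri: "(U, V, W, u, v, w) \<in> T"
    and a: "a \<in> Hom C N V" and va: "c_comp C v a = c_zero C N W"
  shows "\<exists>k \<in> Hom C (S N) (S U). c_comp C (Sm u) k = Sm a"
proof -
  obtain Z where Z: "is_zero_obj C Z" using zero_obj_exists by blast
  have u: "u \<in> Hom C U V" using triangle_in_Hom[OF tri] by blast
  have "c_comp C (c_zero C (S Z) W) (c_zero C N (S Z)) = c_comp C v a"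
    using comp_zero_left[OF zero_in_Hom] va by simp
  then obtain k where k: "k \<in> Hom C (S N) (S U)"
    and square: "c_comp C (c_neg C (Sm u)) k = c_comp C (Sm a) (c_neg C (Sm (c_id C N)))"
    using triangle_morphism_exists[OF rotate_triangle[OF rotate_triangle[OF trivial_triangle[OF Z]]]
        rotate_triangle[OF tri] a zero_in_Hom] by blast
  have "c_neg C (c_comp C (Sm u) k) = c_neg C (Sm a)"
    using square comp_neg_left[OF k Sm_in_Hom[OF u]] comp_neg_right[OF id_in_Hom Sm_in_Hom[OF a]]
      comp_id_right[OF Sm_in_Hom[OF a]] Sm_id by simp
  then have "c_comp C (Sm u) k = Sm a"
    using neg_inject[OF comp_in_Hom[OF k Sm_in_Hom[OF u]] Sm_in_Hom[OF a]] by blast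
  with k show ?thesis by blast
qed

lemma kernel_factorization_fully_faithful:
  assumes tri: "(U, V, W, u, v, w) \<in> T"
    and ff: "\<And>A B. A \<in> {N, U, V} \<Longrightarrow> B \<in> {N, U, V} \<Longrightarrow>
      bij_betw Sm (Hom C A B) (Hom C (S A) (S B))"
    and a: "a \<in> Hom C N V" and va: "c_comp C v a = c_zero C N W"
  shows "\<exists>b \<in> Hom C N U. a = c_comp C u b"
proof -
  have u: "u \<in> Hom C U V" using triangle_in_Hom[OF tri] by blast
  obtain k where k: "k \<in> Hom C (S N) (S U)" and uk: "c_comp C (Sm u) k = Sm a"
    using suspended_kernel_factorization[OF tri a va] by blast
  obtain b where b: "b \<in> Hom C N U" and kb: "k = Sm b"
    using ff[of N U] k unfolding bij_betw_def by blast
  have "Sm (c_comp C u b) = Sm a" using Sm_comp[OF b u] uk kb by simp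
  then have "c_comp C u b = a"
    using ff[of N V] comp_in_Hom[OF b u] a unfolding bij_betw_def inj_on_def by blast
  with b show ?thesis by blast
qed

end

theorem lemma3p7:
  fixes C :: "('o, 'm, 'k::field) klincat"
    and S :: "'o \<Rightarrow> 'o" and Sm :: "'m \<Rightarrow> 'm"
    and T :: "('o, 'm) tri set" and M :: "'o set"
  assumes "std_cat C"
    and "right_triangulated C S Sm T"
    and "is_subcat C M"
    and "rigid C S M"
    and "RC1 C S Sm M"
    and "RC2 C T M"
    and "M0 \<in> M" and "M1 \<in> M"
    and "(M0, M1, X, f, g, h) \<in> T"
  shows "modM_exact C M M0 M1 X f g \<and> restr_hom_in_modM C M X"
proof -
  interpret right_triangulated_cat C S Sm T
    using assms(1,2) unfolding std_cat_def by unfold_locales auto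
  note tri = assms(9)
  have f: "f \<in> Hom C M0 M1" and g: "g \<in> Hom C M1 X" using triangle_in_Hom[OF tri] by auto
  have exact: "modM_exact C M M0 M1 X f g"
    unfolding modM_exact_def
  proof (intro conjI f g ballI iffI)
    fix N a assume "N \<in> M" "a \<in> Hom C N M1" "c_comp C g a = c_zero C N X"
    then show "\<exists>b \<in> Hom C N M0. a = c_comp C f b"
      using kernel_factorization_fully_faithful[OF tri] assms(5,7,8) unfolding RC1_def by blast
  next
    fix N a assume "\<exists>b \<in> Hom C N M0. a = c_comp C f b"
    then obtain b where b: "b \<in> Hom C N M0" and ab: "a = c_comp C f b" by blast
    show "c_comp C g a = c_zero C N X"
      using ab comp_assoc[OF b f g] triangle_comp_zero[OF tri] comp_zero_left[OF b] by simp
  next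
    fix N c assume "N \<in> M" "c \<in> Hom C N X"
    then show "\<exists>a \<in> Hom C N M1. c = c_comp C g a"
      using assms(6-9) unfolding RC2_def right_approx_def by blast
  qed
  with assms(7,8) show ?thesis unfolding restr_hom_in_modM_def by blast
qed

end
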